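(* Let $a,b,c\ge 0$ be real parameters and consider the polynomial system on $\mathbb{C}^3$ $$\dot x=x(1-y+cx-axz),\qquad \dot y=y(-1+x),\qquad \dot z=z(-b+ax^2).$$ Then the unique irreducible Darboux polynomials of this system with non-zero cofactors are $x$, $y$ and $z$.
   Context: The vector field of the system is $\mathcal{X}=x(1-y+cx-axz)\partial_x+y(-1+x)\partial_y+z(-b+ax^2)\partial_z$. A Darboux polynomial is a polynomial $f\in\mathbb{C}[x,y,z]$ such that $\mathcal{X}f=Kf$ for some polynomial $K\in\mathbb{C}[x,y,z]$ (the cofactor) of degree at most two. *)

theory Defs
  imports Complex_Main "HOL-Computational_Algebra.Polynomial"
begin

text \<open>Polynomials in \<open>\<complex>[x,y,z]\<close> are represented as iterated univariate polynomials
  \<open>\<complex>[x][y][z]\<close>: the outermost variable is z, the middle one y, the innermost x.\<close>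

type_synonym cpoly3 = "complex poly poly poly"

definition Xv :: cpoly3 where "Xv = [:[:[:0, 1:]:]:]"
definition Yv :: cpoly3 where "Yv = [:[:0, 1:]:]"
definition Zv :: cpoly3 where "Zv = [:0, 1:]"

definition Cst :: "complex \<Rightarrow> cpoly3" where "Cst c = [:[:[:c:]:]:]"

definition dX :: "cpoly3 \<Rightarrow> cpoly3" where "dX p = map_poly (map_poly pderiv) p"
definition dY :: "cpoly3 \<Rightarrow> cpoly3" where "dY p = map_poly pderiv p"
definition dZ :: "cpoly3 \<Rightarrow> cpoly3" where "dZ p = pderiv p"

definition mcoeff :: "cpoly3 \<Rightarrow> nat \<Rightarrow> nat \<Rightarrow> nat \<Rightarrow> complex" where
  "mcoeff p i j k = coeff (coeff (coeff p k) j) i"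

definition total_degree_le :: "cpoly3 \<Rightarrow> nat \<Rightarrow> bool" where
  "total_degree_le p d \<longleftrightarrow> (\<forall>i j k. mcoeff p i j k \<noteq> 0 \<longrightarrow> i + j + k \<le> d)"

definition vf :: "real \<Rightarrow> real \<Rightarrow> real \<Rightarrow> cpoly3 \<Rightarrow> cpoly3" where
  "vf a b c f =
     Xv * (1 - Yv + Cst (complex_of_real c) * Xv - Cst (complex_of_real a) * Xv * Zv) * dX f
   + Yv * (-1 + Xv) * dY f
   + Zv * (- Cst (complex_of_real b) + Cst (complex_of_real a) * Xv ^ 2) * dZ f"

definition darboux :: "real \<Rightarrow> real \<Rightarrow> real \<Rightarrow> cpoly3 \<Rightarrow> cpoly3 \<Rightarrow> bool" where
  "darboux a b c f K \<longleftrightarrow> total_degree_le K 2 \<and> vf a b c f = K * f"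

end

theory Submission
  imports Defs
begin

text \<open>Write \<open>f = \<Sum> f\<^sub>i\<^sub>j\<^sub>k x\<^sup>i y\<^sup>j z\<^sup>k\<close>. Comparing coefficients in \<open>\<X> f = K f\<close> turns the
  Darboux equation into a linear recurrence for the \<open>f\<^sub>i\<^sub>j\<^sub>k\<close> involving the ten coefficients
  of the quadratic cofactor \<open>K\<close>. If none of \<open>x\<close>, \<open>y\<close>, \<open>z\<close> divides \<open>f\<close>, then \<open>f\<close> has
  monomials on each coordinate plane, and its extremal monomials on \<open>x = 0\<close> and \<open>z = 0\<close>
  kill the coefficients of \<open>y, z, y\<^sup>2, z\<^sup>2, yz, x\<^sup>2, xy\<close> in \<open>K\<close>. What remains, on \<open>z = 0\<close>
  and (if \<open>a = 0\<close>) on every plane \<open>z = const\<close>, is the coefficient recurrence of a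
  Lotka--Volterra field in \<open>x, y\<close>, whose Darboux polynomials do not involve \<open>x\<close>. Hence \<open>f\<close>
  does not involve \<open>x\<close>, and then \<open>K = 0\<close>. So an irreducible Darboux polynomial with non-zero
  cofactor is divisible by, hence associated to, one of \<open>x\<close>, \<open>y\<close>, \<open>z\<close>.\<close>

section \<open>Coefficients of polynomials in \<open>\<complex>[x,y,z]\<close>\<close>

lemma mcoeff_0 [simp]: "mcoeff 0 i j k = 0"
  by (simp add: mcoeff_def)

lemma mcoeff_add [simp]: "mcoeff (p + q) i j k = mcoeff p i j k + mcoeff q i j k"
  and mcoeff_diff [simp]: "mcoeff (p - q) i j k = mcoeff p i j k - mcoeff q i j k"
  by (simp_all add: mcoeff_def)

lemma mcoeff_sum: "mcoeff (sum g S) i j k = (\<Sum>s\<in>S. mcoeff (g s) i j k)"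
  by (simp add: mcoeff_def coeff_sum)

lemma mcoeff_eqI: "(\<And>i j k. mcoeff p i j k = mcoeff q i j k) \<Longrightarrow> p = q"
  by (simp add: mcoeff_def poly_eq_iff)

lemma finite_mcoeff_support: "finite {(i, j, k). mcoeff p i j k \<noteq> 0}"
proof (rule finite_subset)
  show "{(i, j, k). mcoeff p i j k \<noteq> 0} \<subseteq>
      (\<Union>k\<le>degree p. \<Union>j\<le>degree (coeff p k). (\<lambda>i. (i, j, k)) ` {..degree (coeff (coeff p k) j)})"
    by (force simp: mcoeff_def intro: le_degree)
qed auto

definition monomial3 :: "complex \<Rightarrow> nat \<Rightarrow> nat \<Rightarrow> nat \<Rightarrow> cpoly3" where
  "monomial3 c p q r = monom (monom (monom c p) q) r"

lemma mcoeff_monomial3: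
  "mcoeff (monomial3 c p q r) i j k = (if (i, j, k) = (p, q, r) then c else 0)"
  by (simp add: mcoeff_def monomial3_def coeff_monom)

lemma monomial3_mult:
  "monomial3 c p q r * monomial3 d p' q' r' = monomial3 (c * d) (p + p') (q + q') (r + r')"
  by (simp add: monomial3_def mult_monom)

lemma one_monomial3: "1 = monomial3 1 0 0 0"
  by (simp add: monomial3_def one_pCons monom_0)

lemma Xv_monomial3: "Xv = monomial3 1 1 0 0"
  and Yv_monomial3: "Yv = monomial3 1 0 1 0"
  and Zv_monomial3: "Zv = monomial3 1 0 0 1"
  and Cst_monomial3: "Cst c = monomial3 c 0 0 0"
  by (simp_all add: Xv_def Yv_def Zv_def Cst_def monomial3_def monom_0 monom_Suc one_pCons)

lemma poly3_monomial_expansion: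
  assumes "finite S" and "{(p, q, r). mcoeff K p q r \<noteq> 0} \<subseteq> S"
  shows "K = (\<Sum>(p, q, r)\<in>S. monomial3 (mcoeff K p q r) p q r)"
proof (rule mcoeff_eqI)
  fix i j k
  show "mcoeff K i j k = mcoeff (\<Sum>(p, q, r)\<in>S. monomial3 (mcoeff K p q r) p q r) i j k"
  proof -
    have "mcoeff (\<Sum>(p, q, r)\<in>S. monomial3 (mcoeff K p q r) p q r) i j k =
        (if (i, j, k) \<in> S then mcoeff K i j k else 0)"
      using assms(1) by (simp add: mcoeff_sum mcoeff_monomial3 case_prod_unfold sum.delta')
    also have "\<dots> = mcoeff K i j k"
      using assms(2) by auto
    finally show ?thesis
      by (rule sym)
  qed
qed

lemma mcoeff_dX: "mcoeff (dX p) i j k = of_nat (Suc i) * mcoeff p (Suc i) j k"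
  by (simp add: mcoeff_def dX_def coeff_map_poly coeff_pderiv del: of_nat_Suc)

lemma mcoeff_dY: "mcoeff (dY p) i j k = of_nat (Suc j) * mcoeff p i (Suc j) k"
  by (simp add: mcoeff_def dY_def coeff_map_poly coeff_pderiv of_nat_mult_conv_smult
      del: of_nat_Suc)

lemma mcoeff_dZ: "mcoeff (dZ p) i j k = of_nat (Suc k) * mcoeff p i j (Suc k)"
  by (simp add: mcoeff_def dZ_def coeff_pderiv of_nat_mult_conv_smult del: of_nat_Suc)

text \<open>Integer exponents let the shifted coefficients in the recurrences below be written without
  side conditions.\<close>

definition mcoeff_int :: "cpoly3 \<Rightarrow> int \<Rightarrow> int \<Rightarrow> int \<Rightarrow> complex" where
  "mcoeff_int p i j k =
     (if 0 \<le> i \<and> 0 \<le> j \<and> 0 \<le> k then mcoeff p (nat i) (nat j) (nat k) else 0)"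

lemma mcoeff_int_nonneg: "mcoeff_int p i j k \<noteq> 0 \<Longrightarrow> 0 \<le> i \<and> 0 \<le> j \<and> 0 \<le> k"
  by (auto simp: mcoeff_int_def split: if_splits)

lemma mcoeff_int_neg [simp]:
  "i < 0 \<Longrightarrow> mcoeff_int p i j k = 0"
  "j < 0 \<Longrightarrow> mcoeff_int p i j k = 0"
  "k < 0 \<Longrightarrow> mcoeff_int p i j k = 0"
  by (simp_all add: mcoeff_int_def)

lemma mcoeff_int_of_nat [simp]: "mcoeff_int p (int i) (int j) (int k) = mcoeff p i j k"
  by (simp add: mcoeff_int_def)

lemma mcoeff_int_add [simp]: "mcoeff_int (p + q) i j k = mcoeff_int p i j k + mcoeff_int q i j k"
  and mcoeff_int_diff [simp]: "mcoeff_int (p - q) i j k = mcoeff_int p i j k - mcoeff_int q i j k"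
  and mcoeff_int_uminus [simp]: "mcoeff_int (- p) i j k = - mcoeff_int p i j k"
  and mcoeff_int_0 [simp]: "mcoeff_int 0 i j k = 0"
  by (simp_all add: mcoeff_int_def mcoeff_def)

lemma mcoeff_int_sum: "mcoeff_int (sum g S) i j k = (\<Sum>s\<in>S. mcoeff_int (g s) i j k)"
  by (induction S rule: infinite_finite_induct) simp_all

lemma mcoeff_int_eqI: "(\<And>i j k. mcoeff_int p i j k = mcoeff_int q i j k) \<Longrightarrow> p = q"
  by (rule mcoeff_eqI) (metis mcoeff_int_of_nat)

lemma finite_mcoeff_int_support: "finite {(i, j, k). mcoeff_int p i j k \<noteq> 0}"
proof (rule finite_subset)
  show "{(i, j, k). mcoeff_int p i j k \<noteq> 0} \<subseteq>
      (\<lambda>(i, j, k). (int i, int j, int k)) ` {(i, j, k). mcoeff p i j k \<noteq> 0}"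
    by (clarsimp simp: mcoeff_int_def image_iff split: if_splits)
      (metis int_nat_eq)
qed (use finite_mcoeff_support in blast)

lemma mcoeff_int_monomial3_mult [simp]:
  "mcoeff_int (monomial3 c p q r * f) i j k = c * mcoeff_int f (i - int p) (j - int q) (k - int r)"
  by (auto simp: mcoeff_int_def mcoeff_def monomial3_def coeff_monom_mult nat_diff_distrib)

lemma mcoeff_int_Xv_mult [simp]: "mcoeff_int (Xv * f) i j k = mcoeff_int f (i - 1) j k"
  and mcoeff_int_Yv_mult [simp]: "mcoeff_int (Yv * f) i j k = mcoeff_int f i (j - 1) k"
  and mcoeff_int_Zv_mult [simp]: "mcoeff_int (Zv * f) i j k = mcoeff_int f i j (k - 1)"
  and mcoeff_int_Cst_mult [simp]: "mcoeff_int (Cst c * f) i j k = c * mcoeff_int f i j k"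
  by (simp_all add: Xv_monomial3 Yv_monomial3 Zv_monomial3 Cst_monomial3)

lemma mcoeff_int_dX [simp]: "mcoeff_int (dX p) i j k = of_int (i + 1) * mcoeff_int p (i + 1) j k"
  by (cases "i = -1") (auto simp: mcoeff_int_def mcoeff_dX Suc_nat_eq_nat_zadd1 add.commute)

lemma mcoeff_int_dY [simp]: "mcoeff_int (dY p) i j k = of_int (j + 1) * mcoeff_int p i (j + 1) k"
  by (cases "j = -1") (auto simp: mcoeff_int_def mcoeff_dY Suc_nat_eq_nat_zadd1 add.commute)

lemma mcoeff_int_dZ [simp]: "mcoeff_int (dZ p) i j k = of_int (k + 1) * mcoeff_int p i j (k + 1)"
  by (cases "k = -1") (auto simp: mcoeff_int_def mcoeff_dZ Suc_nat_eq_nat_zadd1 add.commute)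

lemma mcoeff_int_vf:
  "mcoeff_int (vf a b c f) i j k =
     (of_int i - of_int j - of_real b * of_int k) * mcoeff_int f i j k
   + (of_real c * (of_int i - 1) + of_int j) * mcoeff_int f (i - 1) j k
   - of_int i * mcoeff_int f i (j - 1) k
   - of_real a * (of_int i - 1) * mcoeff_int f (i - 1) j (k - 1)
   + of_real a * of_int k * mcoeff_int f (i - 2) j k"
proof -
  have "vf a b c f = Xv * dX f - Xv * (Yv * dX f) + Cst (of_real c) * (Xv * (Xv * dX f))
     - Cst (of_real a) * (Xv * (Xv * (Zv * dX f))) + Yv * (Xv * dY f) - Yv * dY f
     - Cst (of_real b) * (Zv * dZ f) + Cst (of_real a) * (Xv * (Xv * (Zv * dZ f)))"
    unfolding vf_def by (simp add: algebra_simps power2_eq_square)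
  then show ?thesis
    by simp (simp add: algebra_simps)
qed

lemma mcoeff_int_mult_expansion:
  assumes "finite S" and "{(p, q, r). mcoeff K p q r \<noteq> 0} \<subseteq> S"
  shows "mcoeff_int (K * f) i j k =
    (\<Sum>(p, q, r)\<in>S. mcoeff_int K p q r * mcoeff_int f (i - int p) (j - int q) (k - int r))"
  by (subst poly3_monomial_expansion[OF assms])
    (simp add: sum_distrib_right mcoeff_int_sum case_prod_unfold)

lemma total_degree_le_2_exponents:
  "{(p, q, r). p + q + r \<le> (2::nat)} =
    {(0,0,0), (1,0,0), (0,1,0), (0,0,1), (2,0,0), (0,2,0), (0,0,2), (1,1,0), (1,0,1), (0,1,1)}"
  (is "_ = ?E")
proof (intro set_eqI iffI)
  fix s :: "nat \<times> nat \<times> nat"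
  assume "s \<in> {(p, q, r). p + q + r \<le> 2}"
  then obtain p q r where s: "s = (p, q, r)" and le: "p + q + r \<le> 2" by auto
  then have "p = 0 \<or> p = 1 \<or> p = 2" "q = 0 \<or> q = 1 \<or> q = 2" "r = 0 \<or> r = 1 \<or> r = 2"
    by linarith+
  then show "s \<in> ?E"
    using le unfolding s by (elim disjE) simp_all
qed auto

lemma mcoeff_int_quadratic_mult:
  assumes "total_degree_le K 2"
  shows "mcoeff_int (K * f) i j k =
      mcoeff_int K 0 0 0 * mcoeff_int f i j k
    + mcoeff_int K 1 0 0 * mcoeff_int f (i - 1) j k + mcoeff_int K 0 1 0 * mcoeff_int f i (j - 1) k
    + mcoeff_int K 0 0 1 * mcoeff_int f i j (k - 1) + mcoeff_int K 2 0 0 * mcoeff_int f (i - 2) j k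
    + mcoeff_int K 0 2 0 * mcoeff_int f i (j - 2) k + mcoeff_int K 0 0 2 * mcoeff_int f i j (k - 2)
    + mcoeff_int K 1 1 0 * mcoeff_int f (i - 1) (j - 1) k
    + mcoeff_int K 1 0 1 * mcoeff_int f (i - 1) j (k - 1)
    + mcoeff_int K 0 1 1 * mcoeff_int f i (j - 1) (k - 1)"
proof -
  have "{(p, q, r). mcoeff K p q r \<noteq> 0} \<subseteq> {(p, q, r). p + q + r \<le> 2}"
    using assms by (auto simp: total_degree_le_def)
  from mcoeff_int_mult_expansion[OF _ this, of f i j k] show ?thesis
    unfolding total_degree_le_2_exponents by (simp add: add_ac del: mcoeff_int_of_nat)
qed

lemma quadratic_eq_0I:
  assumes "total_degree_le K 2"
    and "mcoeff_int K 0 0 0 = 0" "mcoeff_int K 1 0 0 = 0" "mcoeff_int K 0 1 0 = 0"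
    and "mcoeff_int K 0 0 1 = 0" "mcoeff_int K 2 0 0 = 0" "mcoeff_int K 0 2 0 = 0"
    and "mcoeff_int K 0 0 2 = 0" "mcoeff_int K 1 1 0 = 0" "mcoeff_int K 1 0 1 = 0"
    and "mcoeff_int K 0 1 1 = 0"
  shows "K = 0"
proof (rule mcoeff_eqI)
  fix p q r
  show "mcoeff K p q r = mcoeff 0 p q r"
  proof (cases "p + q + r \<le> 2")
    case True
    then have "(p, q, r) \<in> {(p, q, r). p + q + r \<le> 2}" by simp
    then have "mcoeff_int K (int p) (int q) (int r) = 0"
      unfolding total_degree_le_2_exponents using assms(2-) by (elim insertE emptyE) simp_all
    then show ?thesis by (simp add: mcoeff_def)
  next
    case False
    with assms(1) show ?thesis by (auto simp: total_degree_le_def mcoeff_def)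
  qed
qed

lemma Xv_dvdI:
  assumes "\<And>j k. mcoeff_int f 0 j k = 0"
  shows "Xv dvd f"
proof (rule dvdI, rule mcoeff_int_eqI)
  fix i j k
  show "mcoeff_int f i j k = mcoeff_int (Xv * map_poly (map_poly (poly_shift 1)) f) i j k"
    unfolding mcoeff_int_Xv_mult using assms[of j k]
    by (cases "i = 0")
      (auto simp: mcoeff_int_def mcoeff_def coeff_map_poly coeff_poly_shift nat_diff_distrib)
qed

lemma Yv_dvdI:
  assumes "\<And>i k. mcoeff_int f i 0 k = 0"
  shows "Yv dvd f"
proof (rule dvdI, rule mcoeff_int_eqI)
  fix i j k
  show "mcoeff_int f i j k = mcoeff_int (Yv * map_poly (poly_shift 1) f) i j k"
    unfolding mcoeff_int_Yv_mult using assms[of i k]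
    by (cases "j = 0")
      (auto simp: mcoeff_int_def mcoeff_def coeff_map_poly coeff_poly_shift nat_diff_distrib)
qed

lemma Zv_dvdI:
  assumes "\<And>i j. mcoeff_int f i j 0 = 0"
  shows "Zv dvd f"
proof (rule dvdI, rule mcoeff_int_eqI)
  fix i j k
  show "mcoeff_int f i j k = mcoeff_int (Zv * poly_shift 1 f) i j k"
    unfolding mcoeff_int_Zv_mult using assms[of i j]
    by (cases "k = 0") (auto simp: mcoeff_int_def mcoeff_def coeff_poly_shift nat_diff_distrib)
qed

lemma finite_support_max2E:
  fixes F :: "int \<Rightarrow> int \<Rightarrow> complex" and w :: "int \<Rightarrow> int \<Rightarrow> int"
  assumes "finite {(i, j). F i j \<noteq> 0}" and "F i0 j0 \<noteq> 0"
  obtains i j where "F i j \<noteq> 0" and "\<And>i' j'. w i j < w i' j' \<Longrightarrow> F i' j' = 0"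
proof -
  obtain x where "is_arg_min (\<lambda>(i, j). - w i j) (\<lambda>x. x \<in> {(i, j). F i j \<noteq> 0}) x"
    using ex_is_arg_min_if_finite[OF assms(1), of "\<lambda>(i, j). - w i j"] assms(2) by blast
  then show thesis
    by (cases x) (auto simp: is_arg_min_def intro: that)
qed

lemma finite_support_max3E:
  fixes F :: "int \<Rightarrow> int \<Rightarrow> int \<Rightarrow> complex" and w :: "int \<Rightarrow> int \<Rightarrow> int \<Rightarrow> int"
  assumes "finite {(i, j, k). F i j k \<noteq> 0}" and "F i0 j0 k0 \<noteq> 0"
  obtains i j k where "F i j k \<noteq> 0" and "\<And>i' j' k'. w i j k < w i' j' k' \<Longrightarrow> F i' j' k' = 0"
proof -
  obtain x where "is_arg_min (\<lambda>(i, j, k). - w i j k) (\<lambda>x. x \<in> {(i, j, k). F i j k \<noteq> 0}) x"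
    using ex_is_arg_min_if_finite[OF assms(1), of "\<lambda>(i, j, k). - w i j k"] assms(2) by blast
  then show thesis
    by (cases x) (auto simp: is_arg_min_def intro: that)
qed

section \<open>A Lotka--Volterra recurrence\<close>

text \<open>The coefficient form of \<open>\<X>\<^sub>0 P = (k0 + k1 x) P\<close> for the Lotka--Volterra field
  \<open>\<X>\<^sub>0 = x(1 - y + c x)\<partial>\<^sub>x + y(x - 1)\<partial>\<^sub>y\<close>.\<close>

locale lotka_volterra_coeffs =
  fixes P :: "int \<Rightarrow> int \<Rightarrow> complex" and c k0 k1 :: complex
  assumes finite_support: "finite {(i, j). P i j \<noteq> 0}"
    and support_nonneg: "P i j \<noteq> 0 \<Longrightarrow> 0 \<le> i \<and> 0 \<le> j"
    and recurrence: "(of_int i - of_int j - k0) * P i j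
      + (c * (of_int i - 1) + of_int j - k1) * P (i - 1) j - of_int i * P i (j - 1) = 0"
begin

lemma axis_coeff:
  assumes "P 0 j \<noteq> 0"
  shows "of_int j = - k0"
proof -
  have "P (-1) j = 0"
    using support_nonneg[of "-1" j] by auto
  then have "(of_int j + k0) * P 0 j = 0"
    using recurrence[of 0 j] by simp algebra
  with assms show ?thesis
    by (simp add: add_eq_0_iff)
qed

lemma support_reaches_axis:
  assumes "P i j \<noteq> 0"
  shows "\<exists>j'. P 0 j' \<noteq> 0 \<and> i + j \<le> j'"
proof -
  have "0 \<le> i" using assms support_nonneg by blast
  then obtain n where "i = int n" by (metis nonneg_eq_int)
  with assms show ?thesis
  proof (induction n arbitrary: i j)
    case 0
    then show ?case by auto
  next
    case (Suc n)
    have "finite {j. P i j \<noteq> 0}"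
      by (rule finite_subset[OF _ finite_imageI[OF finite_support, of snd]]) force
    define t where "t = Max {j. P i j \<noteq> 0}"
    have "P i t \<noteq> 0" and "j \<le> t"
      using Max_in[OF \<open>finite _\<close>] Max_ge[OF \<open>finite _\<close>] Suc.prems(1) by (auto simp: t_def)
    have "P i (t + 1) = 0"
      using Max_ge[OF \<open>finite _\<close>, of "t + 1"] by (auto simp: t_def)
    then have "(c * (of_int i - 1) + of_int (t + 1) - k1) * P (i - 1) (t + 1) = of_int i * P i t"
      using recurrence[of i "t + 1"] by simp
    moreover have "i \<noteq> 0"
      using Suc.prems(2) by simp
    with \<open>P i t \<noteq> 0\<close> have "of_int i * P i t \<noteq> 0"
      by simp
    ultimately have "P (i - 1) (t + 1) \<noteq> 0" by auto
    with Suc.IH[of "i - 1" "t + 1"] Suc.prems(2) obtain j' where "P 0 j' \<noteq> 0" "i + t \<le> j'"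
      by auto
    with \<open>j \<le> t\<close> show ?case by auto
  qed
qed

text \<open>By \<open>axis_coeff\<close> the only monomial on the axis is \<open>y\<^sup>\<beta>\<close> with \<open>\<beta> = -k0\<close>. At a monomial
  of least total degree the recurrence gives \<open>i - j + \<beta> = 0\<close>, so that degree is \<open>\<beta>\<close>; by
  \<open>support_reaches_axis\<close> no degree exceeds \<open>\<beta>\<close>. Hence all monomials have degree \<open>\<beta>\<close>, and
  then the recurrence gives \<open>i - j + \<beta> = 0\<close> at each of them.\<close>

lemma support_on_axis:
  assumes "P i j \<noteq> 0"
  shows "i = 0"
proof -
  obtain i0 j0 where "P i0 j0 \<noteq> 0" and min: "\<And>i' j'. - (i0 + j0) < - (i' + j') \<Longrightarrow> P i' j' = 0"
    using finite_support_max2E[OF finite_support assms, of "\<lambda>i j. - (i + j)"] by blast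
  obtain \<beta> where "P 0 \<beta> \<noteq> 0" and "i0 + j0 \<le> \<beta>"
    using support_reaches_axis[OF \<open>P i0 j0 \<noteq> 0\<close>] by blast
  have \<beta>: "k0 = - of_int \<beta>"
    using axis_coeff[OF \<open>P 0 \<beta> \<noteq> 0\<close>] by simp
  have diag: "i' - j' + \<beta> = 0" if "P i' j' \<noteq> 0" "P (i' - 1) j' = 0" "P i' (j' - 1) = 0" for i' j'
  proof -
    have "of_int (i' - j' + \<beta>) * P i' j' = 0"
      using recurrence[of i' j'] that(2,3) \<beta> by (simp add: algebra_simps)
    with that(1) show ?thesis
      by (metis mult_eq_0_iff of_int_eq_0_iff)
  qed
  have "i0 - j0 + \<beta> = 0"
    using diag[OF \<open>P i0 j0 \<noteq> 0\<close>] min by simp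
  moreover have "0 \<le> i0" using support_nonneg \<open>P i0 j0 \<noteq> 0\<close> by blast
  ultimately have "i0 + j0 = \<beta>" using \<open>i0 + j0 \<le> \<beta>\<close> by linarith
  have on_line: "i' + j' = \<beta>" if nz: "P i' j' \<noteq> 0" for i' j'
  proof -
    obtain \<beta>' where "P 0 \<beta>' \<noteq> 0" and "i' + j' \<le> \<beta>'"
      using support_reaches_axis[OF nz] by blast
    moreover have "\<beta>' = \<beta>"
      using axis_coeff[OF \<open>P 0 \<beta>' \<noteq> 0\<close>] axis_coeff[OF \<open>P 0 \<beta> \<noteq> 0\<close>] of_int_eq_iff
      by metis
    moreover have "\<beta> \<le> i' + j'"
      using min[of i' j'] nz \<open>i0 + j0 = \<beta>\<close> by linarith
    ultimately show ?thesis by simp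
  qed
  have "i - j + \<beta> = 0"
    using diag[OF assms] on_line[of "i - 1" j] on_line[of i "j - 1"] on_line[OF assms] by force
  with on_line[OF assms] show "i = 0" by simp
qed

end

section \<open>Cofactors of Darboux polynomials coprime to \<open>xyz\<close>\<close>

locale darboux_coprime_xyz =
  fixes a b c :: real and f K :: cpoly3
  assumes darboux: "darboux a b c f K"
    and not_Xv_dvd: "\<not> Xv dvd f" and not_Yv_dvd: "\<not> Yv dvd f" and not_Zv_dvd: "\<not> Zv dvd f"
begin

abbreviation F where "F \<equiv> mcoeff_int f"
abbreviation \<kappa> where "\<kappa> \<equiv> mcoeff_int K"

lemma recurrence:
  "(of_int i - of_int j - of_real b * of_int k) * F i j k
   + (of_real c * (of_int i - 1) + of_int j) * F (i - 1) j k
   - of_int i * F i (j - 1) k - of_real a * (of_int i - 1) * F (i - 1) j (k - 1)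
   + of_real a * of_int k * F (i - 2) j k
 = \<kappa> 0 0 0 * F i j k
   + \<kappa> 1 0 0 * F (i - 1) j k + \<kappa> 0 1 0 * F i (j - 1) k + \<kappa> 0 0 1 * F i j (k - 1)
   + \<kappa> 2 0 0 * F (i - 2) j k + \<kappa> 0 2 0 * F i (j - 2) k + \<kappa> 0 0 2 * F i j (k - 2)
   + \<kappa> 1 1 0 * F (i - 1) (j - 1) k + \<kappa> 1 0 1 * F (i - 1) j (k - 1)
   + \<kappa> 0 1 1 * F i (j - 1) (k - 1)"
  using darboux mcoeff_int_vf[of a b c f i j k] mcoeff_int_quadratic_mult[of K f i j k]
  by (simp add: darboux_def)

lemma support_nonneg: "F i j k \<noteq> 0 \<Longrightarrow> 0 \<le> i \<and> 0 \<le> j \<and> 0 \<le> k"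
  by (rule mcoeff_int_nonneg)

lemma finite_support: "finite {(i, j, k). F i j k \<noteq> 0}"
  by (rule finite_mcoeff_int_support)

lemma finite_x_slice: "finite {(j, k). F i j k \<noteq> 0}"
  by (rule finite_subset[OF _ finite_imageI[OF finite_support, of "\<lambda>(i, j, k). (j, k)"]]) force

lemma finite_z_slice: "finite {(i, j). F i j k \<noteq> 0}"
  by (rule finite_subset[OF _ finite_imageI[OF finite_support, of "\<lambda>(i, j, k). (i, j)"]]) force

lemma x_slice_nonzero: obtains j k where "F 0 j k \<noteq> 0"
  using Xv_dvdI not_Xv_dvd by blast

lemma y_slice_nonzero: obtains i k where "F i 0 k \<noteq> 0"
  using Yv_dvdI not_Yv_dvd by blast

lemma z_slice_nonzero: obtains i j where "F i j 0 \<noteq> 0"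
  using Zv_dvdI not_Zv_dvd by blast

text \<open>On \<open>x = 0\<close> the equation reads \<open>-(y \<partial>\<^sub>y + b z \<partial>\<^sub>z) f(0,y,z) = K(0,y,z) f(0,y,z)\<close>;
  compare coefficients just beyond the extremal monomials of \<open>f(0,y,z)\<close> for the weights
  \<open>2j + k\<close> and \<open>j + 2k\<close>.\<close>

lemma cofactor_yz_terms_vanish:
  shows "\<kappa> 0 1 0 = 0" and "\<kappa> 0 0 1 = 0" and "\<kappa> 0 2 0 = 0" and "\<kappa> 0 0 2 = 0" and "\<kappa> 0 1 1 = 0"
proof -
  obtain j0 k0 where "F 0 j0 k0 \<noteq> 0" by (rule x_slice_nonzero)
  obtain j1 k1 where p1: "F 0 j1 k1 \<noteq> 0" and m1: "\<And>j k. 2 * j1 + k1 < 2 * j + k \<Longrightarrow> F 0 j k = 0"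
    using finite_support_max2E[OF finite_x_slice \<open>F 0 j0 k0 \<noteq> 0\<close>, of "\<lambda>j k. 2 * j + k"] by blast
  obtain j2 k2 where p2: "F 0 j2 k2 \<noteq> 0" and m2: "\<And>j k. j2 + 2 * k2 < j + 2 * k \<Longrightarrow> F 0 j k = 0"
    using finite_support_max2E[OF finite_x_slice \<open>F 0 j0 k0 \<noteq> 0\<close>, of "\<lambda>j k. j + 2 * k"] by blast
  have "\<kappa> 0 2 0 * F 0 j1 k1 = 0"
    using recurrence[of 0 "j1 + 2" k1] by (simp add: m1)
  with p1 show "\<kappa> 0 2 0 = 0" by simp
  have "\<kappa> 0 0 2 * F 0 j2 k2 = 0"
    using recurrence[of 0 j2 "k2 + 2"] by (simp add: m2)
  with p2 show "\<kappa> 0 0 2 = 0" by simp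
  have "\<kappa> 0 1 1 * F 0 j1 k1 = 0"
    using recurrence[of 0 "j1 + 1" "k1 + 1"] \<open>\<kappa> 0 2 0 = 0\<close> \<open>\<kappa> 0 0 2 = 0\<close> by (simp add: m1)
  with p1 show "\<kappa> 0 1 1 = 0" by simp
  have "\<kappa> 0 1 0 * F 0 j1 k1 = 0"
    using recurrence[of 0 "j1 + 1" k1] \<open>\<kappa> 0 2 0 = 0\<close> \<open>\<kappa> 0 0 2 = 0\<close> \<open>\<kappa> 0 1 1 = 0\<close>
    by (simp add: m1)
  with p1 show "\<kappa> 0 1 0 = 0" by simp
  have "\<kappa> 0 0 1 * F 0 j2 k2 = 0"
    using recurrence[of 0 j2 "k2 + 1"] \<open>\<kappa> 0 2 0 = 0\<close> \<open>\<kappa> 0 0 2 = 0\<close> \<open>\<kappa> 0 1 1 = 0\<close> \<open>\<kappa> 0 1 0 = 0\<close>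
    by (simp add: m2)
  with p2 show "\<kappa> 0 0 1 = 0" by simp
qed

lemma cofactor_x2_xy_terms_vanish:
  shows "\<kappa> 2 0 0 = 0" and "\<kappa> 1 1 0 = 0"
proof -
  obtain i0 j0 where "F i0 j0 0 \<noteq> 0" by (rule z_slice_nonzero)
  obtain i1 j1 where p: "F i1 j1 0 \<noteq> 0" and m: "\<And>i j. 2 * i1 + j1 < 2 * i + j \<Longrightarrow> F i j 0 = 0"
    using finite_support_max2E[OF finite_z_slice \<open>F i0 j0 0 \<noteq> 0\<close>, of "\<lambda>i j. 2 * i + j"] by blast
  have "\<kappa> 2 0 0 * F i1 j1 0 = 0"
    using recurrence[of "i1 + 2" j1 0] by (simp add: m cofactor_yz_terms_vanish)
  with p show "\<kappa> 2 0 0 = 0" by simp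
  have "\<kappa> 1 1 0 * F i1 j1 0 = 0"
    using recurrence[of "i1 + 1" "j1 + 1" 0] \<open>\<kappa> 2 0 0 = 0\<close> by (simp add: m cofactor_yz_terms_vanish)
  with p show "\<kappa> 1 1 0 = 0" by simp
qed

lemma z_slice_lotka_volterra:
  assumes "k = 0 \<or> a = 0 \<and> \<kappa> 1 0 1 = 0"
  shows "lotka_volterra_coeffs (\<lambda>i j. F i j k)
    (of_real c) (\<kappa> 0 0 0 + of_real b * of_int k) (\<kappa> 1 0 0)"
proof
  show "finite {(i, j). F i j k \<noteq> 0}" by (rule finite_z_slice)
  show "F i j k \<noteq> 0 \<Longrightarrow> 0 \<le> i \<and> 0 \<le> j" for i j
    using support_nonneg by blast
  show "(of_int i - of_int j - (\<kappa> 0 0 0 + of_real b * of_int k)) * F i j k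
      + (of_real c * (of_int i - 1) + of_int j - \<kappa> 1 0 0) * F (i - 1) j k
      - of_int i * F i (j - 1) k = 0"
    for i j
    using recurrence[of i j k] assms
    by (auto simp: cofactor_yz_terms_vanish cofactor_x2_xy_terms_vanish algebra_simps)
qed

text \<open>If \<open>a \<noteq> 0\<close>, take a monomial \<open>x\<^sup>iy\<^sup>jz\<^sup>k\<close> of \<open>f\<close> of largest \<open>x\<close>-degree: at \<open>x\<^sup>i\<^sup>+\<^sup>2y\<^sup>jz\<^sup>k\<close>
  the recurrence reduces to \<open>a k f\<^sub>i\<^sub>j\<^sub>k = 0\<close> (the term \<open>a x\<^sup>2 z\<partial>\<^sub>z\<close>), so it lies on \<open>z = 0\<close>.
  If \<open>a = 0\<close>, every plane \<open>z = const\<close> carries a Lotka--Volterra recurrence.\<close>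

lemma support_x_free:
  assumes "F i j k \<noteq> 0"
  shows "i = 0"
proof (cases "a = 0")
  case False
  obtain i1 j1 k1 where p: "F i1 j1 k1 \<noteq> 0" and m: "\<And>i j k. i1 < i \<Longrightarrow> F i j k = 0"
    using finite_support_max3E[OF finite_support assms, of "\<lambda>i j k. i"] by blast
  have "of_real a * of_int k1 * F i1 j1 k1 = 0"
    using recurrence[of "i1 + 2" j1 k1] by (simp add: m cofactor_x2_xy_terms_vanish)
  with p False have "k1 = 0" by simp
  with p have "i1 = 0"
    using lotka_volterra_coeffs.support_on_axis[OF z_slice_lotka_volterra] by blast
  moreover have "i \<le> i1" using m assms by force
  ultimately show ?thesis using support_nonneg[OF assms] by simp
next
  case True
  obtain i1 j1 k1 where p: "F i1 j1 k1 \<noteq> 0" and m: "\<And>i j k. k1 < k \<Longrightarrow> F i j k = 0"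
    using finite_support_max3E[OF finite_support assms, of "\<lambda>i j k. k"] by blast
  have "\<kappa> 1 0 1 * F i1 j1 k1 = 0"
    using recurrence[of "i1 + 1" j1 "k1 + 1"] True by (simp add: m cofactor_yz_terms_vanish)
  with p True have "a = 0 \<and> \<kappa> 1 0 1 = 0" by simp
  then show ?thesis
    using lotka_volterra_coeffs.support_on_axis[OF z_slice_lotka_volterra] assms by blast
qed

lemma cofactor_xz_term_vanishes: "\<kappa> 1 0 1 = 0"
proof -
  obtain j0 k0 where "F 0 j0 k0 \<noteq> 0" by (rule x_slice_nonzero)
  obtain i1 j1 k1 where p: "F i1 j1 k1 \<noteq> 0" and m: "\<And>i j k. k1 < k \<Longrightarrow> F i j k = 0"
    using finite_support_max3E[OF finite_support \<open>F 0 j0 k0 \<noteq> 0\<close>, of "\<lambda>i j k. k"] by blast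
  have "i1 = 0" using support_x_free p by blast
  have "\<kappa> 1 0 1 * F i1 j1 k1 = 0"
    using recurrence[of 1 j1 "k1 + 1"] \<open>i1 = 0\<close> by (simp add: m cofactor_yz_terms_vanish)
  with p show ?thesis by simp
qed

lemma x_coeff_recurrence: "(of_int j - \<kappa> 1 0 0) * F 0 j k = 0"
proof -
  have "F 1 j' k' = 0" for j' k'
    using support_x_free[of 1 j' k'] by auto
  then show ?thesis
    using recurrence[of 1 j k]
    by (simp add: cofactor_yz_terms_vanish cofactor_x2_xy_terms_vanish cofactor_xz_term_vanishes
        algebra_simps)
qed

lemma cofactor_x_term_vanishes: "\<kappa> 1 0 0 = 0"
proof -
  obtain i k where "F i 0 k \<noteq> 0" by (rule y_slice_nonzero)
  moreover from this have "i = 0" by (rule support_x_free)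
  ultimately show ?thesis
    using x_coeff_recurrence[of 0 k] by simp
qed

lemma cofactor_constant_term_vanishes: "\<kappa> 0 0 0 = 0"
proof -
  obtain i j where "F i j 0 \<noteq> 0" by (rule z_slice_nonzero)
  moreover from this have "i = 0" by (rule support_x_free)
  ultimately have "F 0 0 0 \<noteq> 0"
    using x_coeff_recurrence[of j 0] cofactor_x_term_vanishes by auto
  then show ?thesis
    using recurrence[of 0 0 0] by simp
qed

lemma cofactor_eq_0: "K = 0"
  using darboux unfolding darboux_def
  by (auto intro!: quadratic_eq_0I simp: cofactor_constant_term_vanishes cofactor_x_term_vanishes
      cofactor_yz_terms_vanish cofactor_x2_xy_terms_vanish cofactor_xz_term_vanishes)

end

section \<open>The invariant planes \<open>x = 0\<close>, \<open>y = 0\<close>, \<open>z = 0\<close>\<close>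

lemma dX_Xv: "dX Xv = 1" and dY_Xv: "dY Xv = 0" and dZ_Xv: "dZ Xv = 0"
  and dX_Yv: "dX Yv = 0" and dY_Yv: "dY Yv = 1" and dZ_Yv: "dZ Yv = 0"
  and dX_Zv: "dX Zv = 0" and dY_Zv: "dY Zv = 0" and dZ_Zv: "dZ Zv = 1"
  by (simp_all add: dX_def dY_def dZ_def Xv_def Yv_def Zv_def map_poly_pCons pderiv_pCons one_pCons)

lemma darboux_Xv:
  shows "darboux a b c Xv (1 - Yv + Cst (of_real c) * Xv - Cst (of_real a) * Xv * Zv)"
    and "1 - Yv + Cst (of_real c) * Xv - Cst (of_real a) * Xv * Zv \<noteq> 0"
proof -
  have K: "1 - Yv + Cst (of_real c) * Xv - Cst (of_real a) * Xv * Zv =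
      monomial3 1 0 0 0 - monomial3 1 0 1 0 + monomial3 (of_real c) 1 0 0
      - monomial3 (of_real a) 1 0 1"
    by (simp add: Xv_monomial3 Yv_monomial3 Zv_monomial3 Cst_monomial3 monomial3_mult one_monomial3)
  then have "total_degree_le (1 - Yv + Cst (of_real c) * Xv - Cst (of_real a) * Xv * Zv) 2"
    by (simp add: total_degree_le_def mcoeff_monomial3)
  then show "darboux a b c Xv (1 - Yv + Cst (of_real c) * Xv - Cst (of_real a) * Xv * Zv)"
    by (simp add: darboux_def vf_def dX_Xv dY_Xv dZ_Xv algebra_simps)
  have "mcoeff (1 - Yv + Cst (of_real c) * Xv - Cst (of_real a) * Xv * Zv) 0 0 0 = 1"
    unfolding K by (simp add: mcoeff_monomial3)
  then show "1 - Yv + Cst (of_real c) * Xv - Cst (of_real a) * Xv * Zv \<noteq> 0"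
    by (metis mcoeff_0 zero_neq_one)
qed

lemma darboux_Yv:
  shows "darboux a b c Yv (Xv - 1)" and "Xv - 1 \<noteq> 0"
proof -
  have K: "Xv - 1 = monomial3 1 1 0 0 - monomial3 1 0 0 0"
    by (simp add: Xv_monomial3 one_monomial3)
  then have "total_degree_le (Xv - 1) 2"
    by (simp add: total_degree_le_def mcoeff_monomial3)
  then show "darboux a b c Yv (Xv - 1)"
    by (simp add: darboux_def vf_def dX_Yv dY_Yv dZ_Yv algebra_simps)
  have "mcoeff (Xv - 1) 0 0 0 = -1"
    unfolding K by (simp add: mcoeff_monomial3)
  then show "Xv - 1 \<noteq> 0"
    by (metis mcoeff_0 zero_neq_neg_one)
qed

lemma darboux_Zv:
  shows "darboux a b c Zv (Cst (of_real a) * Xv ^ 2 - Cst (of_real b))"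
    and "Cst (of_real a) * Xv ^ 2 - Cst (of_real b) \<noteq> 0 \<or> a = 0 \<and> b = 0"
proof -
  have K: "Cst (of_real a) * Xv ^ 2 - Cst (of_real b) =
      monomial3 (of_real a) 2 0 0 - monomial3 (of_real b) 0 0 0"
    by (simp add: Xv_monomial3 Cst_monomial3 monomial3_mult power2_eq_square numeral_2_eq_2)
  then have "total_degree_le (Cst (of_real a) * Xv ^ 2 - Cst (of_real b)) 2"
    by (simp add: total_degree_le_def mcoeff_monomial3)
  then show "darboux a b c Zv (Cst (of_real a) * Xv ^ 2 - Cst (of_real b))"
    by (simp add: darboux_def vf_def dX_Zv dY_Zv dZ_Zv algebra_simps)
  have "mcoeff (Cst (of_real a) * Xv ^ 2 - Cst (of_real b)) 2 0 0 = of_real a"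
    and "mcoeff (Cst (of_real a) * Xv ^ 2 - Cst (of_real b)) 0 0 0 = - of_real b"
    unfolding K by (simp_all add: mcoeff_monomial3)
  then show "Cst (of_real a) * Xv ^ 2 - Cst (of_real b) \<noteq> 0 \<or> a = 0 \<and> b = 0"
    by (metis mcoeff_0 neg_equal_0_iff_equal of_real_eq_0_iff)
qed

lemma irreducible_pCons_0_1: "irreducible ([:0, 1:] :: 'a::idom poly)"
proof (rule irreducibleI)
  have const_factor_unit: "d dvd 1" if "[:d:] * g = [:0, 1:]" for d :: 'a and g
  proof -
    have "d * coeff g 1 = 1"
      using arg_cong[OF that, of "\<lambda>p. coeff p 1"] by simp
    then show ?thesis by (metis dvdI)
  qed
  fix p q :: "'a poly"
  assume pq: "[:0, 1:] = p * q"
  then have "p \<noteq> 0" and "q \<noteq> 0" by auto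
  then have "degree p + degree q = degree ([:0, 1:] :: 'a poly)"
    unfolding pq by (rule degree_mult_eq[symmetric])
  then consider "degree p = 0" | "degree q = 0" by fastforce
  then show "p dvd 1 \<or> q dvd 1"
  proof cases
    case 1
    then obtain d where "p = [:d:]" by (rule degree_eq_zeroE)
    with pq const_factor_unit[of d q] show ?thesis by (simp add: is_unit_const_poly_iff)
  next
    case 2
    then obtain d where "q = [:d:]" by (rule degree_eq_zeroE)
    with pq const_factor_unit[of d p] show ?thesis
      by (simp add: is_unit_const_poly_iff mult.commute)
  qed
qed (auto simp: is_unit_poly_iff)

lemma irreducible_Xv: "irreducible Xv"
  and irreducible_Yv: "irreducible Yv"
  and irreducible_Zv: "irreducible Zv"
  by (simp_all add: Xv_def Yv_def Zv_def irreducible_const_poly_iff irreducible_pCons_0_1)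

lemma cpoly3_unitE:
  assumes "(g :: cpoly3) dvd 1"
  obtains \<kappa> where "\<kappa> \<noteq> 0" and "g = Cst \<kappa>"
proof -
  obtain g1 where "g = [:g1:]" and "g1 dvd 1" using assms is_unit_poly_iff by blast
  moreover obtain g2 where "g1 = [:g2:]" and "g2 dvd 1" using \<open>g1 dvd 1\<close> is_unit_poly_iff by blast
  moreover obtain g3 where "g2 = [:g3:]" and "g3 dvd 1" using \<open>g2 dvd 1\<close> is_unit_poly_iff by blast
  moreover have "g3 \<noteq> 0" using \<open>g3 dvd 1\<close> by auto
  ultimately show thesis
    using that[of g3] by (simp add: Cst_def)
qed

lemma irreducible_dvd_imp_Cst_mult:
  fixes f V :: cpoly3
  assumes "irreducible f" and "irreducible V" and "V dvd f"
  shows "\<exists>\<kappa>. \<kappa> \<noteq> 0 \<and> f = Cst \<kappa> * V"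
proof -
  obtain g where "f = V * g" using assms(3) by blast
  with assms(1,2) have "g dvd 1"
    by (meson irreducibleD irreducible_not_unit)
  then obtain \<kappa> where "\<kappa> \<noteq> 0" and "g = Cst \<kappa>" by (rule cpoly3_unitE)
  with \<open>f = V * g\<close> show ?thesis by (auto simp: mult.commute)
qed

lemma irreducible_darboux_nonzero_cofactor:
  assumes "irreducible f" and "darboux a b c f K" and "K \<noteq> 0"
  shows "\<exists>\<kappa>. \<kappa> \<noteq> 0 \<and> (f = Cst \<kappa> * Xv \<or> f = Cst \<kappa> * Yv \<or> f = Cst \<kappa> * Zv)"
proof -
  have "Xv dvd f \<or> Yv dvd f \<or> Zv dvd f"
    using assms(2,3) darboux_coprime_xyz.cofactor_eq_0[of a b c f K]
    by (auto simp: darboux_coprime_xyz_def)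
  then show ?thesis
    using irreducible_dvd_imp_Cst_mult[OF assms(1)] irreducible_Xv irreducible_Yv irreducible_Zv
    by blast
qed

theorem theorem1p1:
  fixes a b c :: real
  assumes "a \<ge> 0" and "b \<ge> 0" and "c \<ge> 0"
  shows "(\<forall>f K. irreducible f \<and> darboux a b c f K \<and> K \<noteq> 0 \<longrightarrow>
            (\<exists>\<kappa>. \<kappa> \<noteq> 0 \<and> (f = Cst \<kappa> * Xv \<or> f = Cst \<kappa> * Yv \<or> f = Cst \<kappa> * Zv)))
       \<and> irreducible Xv \<and> irreducible Yv \<and> irreducible Zv
       \<and> (\<exists>K. darboux a b c Xv K \<and> K \<noteq> 0)
       \<and> (\<exists>K. darboux a b c Yv K \<and> K \<noteq> 0)
       \<and> (\<exists>K. darboux a b c Zv K \<and> (K \<noteq> 0 \<or> (a = 0 \<and> b = 0)))"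
proof (intro conjI)
  show "\<forall>f K. irreducible f \<and> darboux a b c f K \<and> K \<noteq> 0 \<longrightarrow>
      (\<exists>\<kappa>. \<kappa> \<noteq> 0 \<and> (f = Cst \<kappa> * Xv \<or> f = Cst \<kappa> * Yv \<or> f = Cst \<kappa> * Zv))"
    using irreducible_darboux_nonzero_cofactor by blast
  show "irreducible Xv" "irreducible Yv" "irreducible Zv"
    by (fact irreducible_Xv irreducible_Yv irreducible_Zv)+
  show "\<exists>K. darboux a b c Xv K \<and> K \<noteq> 0"
    using darboux_Xv by blast
  show "\<exists>K. darboux a b c Yv K \<and> K \<noteq> 0"
    using darboux_Yv by blast
  show "\<exists>K. darboux a b c Zv K \<and> (K \<noteq> 0 \<or> a = 0 \<and> b = 0)"
    using darboux_Zv by blast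
qed

end
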